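(* Let $d\ge2$, $n\ge1$, $N=nd$, $F\in[0,1)$ with $F\neq2^{-N}$, and let $\rho_x=U(x)\rho_0U(x)^\dagger$ where $\rho_0$ is the $N$-qubit depolarized GHZ state with fidelity $F$. Let $M=\sigma_x^{\otimes N}$ and, for $x$ with $v_1\cdot\nabla_x\langle M\rangle\ne0$, define $$\mathrm{Var}_M(x)=\frac{\langle M^2\rangle-\langle M\rangle^2}{\big|v_1\cdot\nabla_x\langle M\rangle\big|^2},\qquad \langle A\rangle=\mathrm{Tr}(\rho_xA),\ v_1=\tfrac1{\sqrt d}(1,\dots,1)^T.$$ Then, with $\theta_1=v_1^Tx$ and $c=F-\frac{1-F}{2^N-1}$, $$\mathrm{Var}_M(x)=\frac{1-c^2\cos^2(n\sqrt d\,\theta_1)}{d\,n^2c^2\sin^2(n\sqrt d\,\theta_1)},$$ and in particular $\mathrm{Var}_M(x)\to+\infty$ as $x\to0$.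
   Context: Setting: $d$ nodes with $n$ qubits each, qubits labelled $(i,k)$; $U(x)=\exp[-i\sum_{i=0}^{d-1}x_iH_i]$ with $H_i=\frac12\sum_{k=0}^{n-1}\sigma_z^{(i,k)}$, $x\in\mathbb{R}^d$. The $N$-qubit depolarized GHZ state with fidelity $F$ is $F|\mathrm{GHZ}_N\rangle\langle\mathrm{GHZ}_N|+\frac{1-F}{2^N-1}(I-|\mathrm{GHZ}_N\rangle\langle\mathrm{GHZ}_N|)$, $|\mathrm{GHZ}_N\rangle=(|0\cdots0\rangle+|1\cdots1\rangle)/\sqrt2$. $\mathrm{Var}_M$ is the error-propagation estimation variance for $\theta_1$ from measuring $M$. *)

theory Defs
  imports "HOL-Analysis.Analysis"
begin

text \<open>Qubits are labelled (i,k) with i :: 'd (the d nodes, d = CARD('d)) and k < n.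
  Computational basis states are configurations s :: 'd \<times> nat \<Rightarrow> bool
  (s q = True means qubit q is in state |1>), supported on the qubit set.\<close>

type_synonym 'd cfg = "'d \<times> nat \<Rightarrow> bool"
type_synonym 'd op = "'d cfg \<Rightarrow> 'd cfg \<Rightarrow> complex"

definition qubits :: "nat \<Rightarrow> ('d::finite \<times> nat) set" where
  "qubits n = UNIV \<times> {..<n}"

definition cfgs :: "nat \<Rightarrow> ('d::finite) cfg set" where
  "cfgs n = {s. \<forall>q. q \<notin> qubits n \<longrightarrow> \<not> s q}"

definition mmul :: "nat \<Rightarrow> ('d::finite) op \<Rightarrow> 'd op \<Rightarrow> 'd op" where
  "mmul n A B = (\<lambda>a c. \<Sum>b\<in>cfgs n. A a b * B b c)"

definition adj :: "('d::finite) op \<Rightarrow> 'd op" where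
  "adj A = (\<lambda>a b. cnj (A b a))"

definition tr :: "nat \<Rightarrow> ('d::finite) op \<Rightarrow> complex" where
  "tr n A = (\<Sum>a\<in>cfgs n. A a a)"

definition idop :: "('d::finite) op" where
  "idop = (\<lambda>a b. if a = b then 1 else 0)"

text \<open>Single-qubit operators as 2x2 matrices indexed by bool (False = |0>, True = |1>).\<close>
definition sigma_x :: "bool \<Rightarrow> bool \<Rightarrow> complex" where
  "sigma_x a b = (if a \<noteq> b then 1 else 0)"

definition sigma_z :: "bool \<Rightarrow> bool \<Rightarrow> complex" where
  "sigma_z a b = (if a = b then (if a then -1 else 1) else 0)"

definition on_qubit :: "('d::finite \<times> nat) \<Rightarrow> (bool \<Rightarrow> bool \<Rightarrow> complex) \<Rightarrow> 'd op" where
  "on_qubit q A = (\<lambda>a b. if (\<forall>p. p \<noteq> q \<longrightarrow> a p = b p) then A (a q) (b q) else 0)"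

definition tensor_all :: "nat \<Rightarrow> (bool \<Rightarrow> bool \<Rightarrow> complex) \<Rightarrow> ('d::finite) op" where
  "tensor_all n A = (\<lambda>a b. \<Prod>q\<in>qubits n. A (a q) (b q))"

definition Hnode :: "nat \<Rightarrow> 'd::finite \<Rightarrow> 'd op" where
  "Hnode n i = (\<lambda>a b. (1/2) * (\<Sum>k<n. on_qubit (i,k) sigma_z a b))"

definition generator :: "nat \<Rightarrow> real^'d::finite \<Rightarrow> 'd op" where
  "generator n x = (\<lambda>a b. \<Sum>i\<in>UNIV. complex_of_real (x $ i) * Hnode n i a b)"

text \<open>U(x) = exp(-i sum_i x_i H_i); the generator is diagonal in the computational
  basis, so its exponential is the diagonal matrix of exponentials of its diagonal.\<close>
definition Uop :: "nat \<Rightarrow> real^'d::finite \<Rightarrow> 'd op" where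
  "Uop n x = (\<lambda>a b. if a = b then exp (- \<i> * generator n x a a) else 0)"

definition ghz_vec :: "nat \<Rightarrow> ('d::finite) cfg \<Rightarrow> complex" where
  "ghz_vec n s = (if s = (\<lambda>q. False) \<or> s = (\<lambda>q. q \<in> qubits n) then 1 / sqrt 2 else 0)"

definition ghz_proj :: "nat \<Rightarrow> ('d::finite) op" where
  "ghz_proj n = (\<lambda>a b. ghz_vec n a * cnj (ghz_vec n b))"

definition rho0 :: "nat \<Rightarrow> real \<Rightarrow> ('d::finite) op" where
  "rho0 n F = (let N = CARD('d) * n in
     (\<lambda>a b. complex_of_real F * ghz_proj n a b
        + complex_of_real ((1 - F) / (2 ^ N - 1)) * (idop a b - ghz_proj n a b)))"

definition rho_x :: "nat \<Rightarrow> real \<Rightarrow> real^'d::finite \<Rightarrow> 'd op" where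
  "rho_x n F x = mmul n (mmul n (Uop n x) (rho0 n F)) (adj (Uop n x))"

text \<open>Expectation value <A> = Tr(rho_x A) (real part; it is real for Hermitian A).\<close>
definition expect :: "nat \<Rightarrow> real \<Rightarrow> real^'d::finite \<Rightarrow> 'd op \<Rightarrow> real" where
  "expect n F x A = Re (tr n (mmul n (rho_x n F x) A))"

definition Mop :: "nat \<Rightarrow> ('d::finite) op" where
  "Mop n = tensor_all n sigma_x"

definition v1 :: "real^'d::finite" where
  "v1 = (\<chi> i. 1 / sqrt (real CARD('d)))"

definition dirM :: "nat \<Rightarrow> real \<Rightarrow> real^'d::finite \<Rightarrow> real" where
  "dirM n F x = frechet_derivative (\<lambda>y. expect n F y (Mop n)) (at x) v1"

definition VarM :: "nat \<Rightarrow> real \<Rightarrow> real^'d::finite \<Rightarrow> real" where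
  "VarM n F x = (expect n F x (mmul n (Mop n) (Mop n)) - (expect n F x (Mop n))\<^sup>2)
                 / \<bar>dirM n F x\<bar>\<^sup>2"

end

theory Submission
  imports Defs
begin

(* M is the permutation matrix of the global bit flip, so Tr(rho_x M) only involves the entries
   of rho_x between a configuration and its flip. Off the diagonal, rho_0 is c times the GHZ
   projector, whose only such entries link |0...0> and |1...1>; the diagonal unitary U(x)
   multiplies these two entries by the phases exp(-+ i n sum_i x_i), so
   <M> = c cos(n sum_i x_i) = c cos(n sqrt(d) theta_1). Since M^2 = I and U(x) is unitary,
   <M^2> = Tr rho_0 = 1. Differentiating along v_1 gives the denominator
   d n^2 c^2 sin^2(n sqrt(d) theta_1), which tends to 0 as x tends to 0, while the numerator tends
   to 1 - c^2 > 0 because |c| < 1 as soon as N >= 2. *)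

lemma finite_qubits [simp]: "finite (qubits n)"
  by (simp add: qubits_def)

lemma cfgs_eq_image_Pow: "cfgs n = (\<lambda>A q. q \<in> A) ` Pow (qubits n)"
proof (intro set_eqI iffI)
  fix s :: "'d::finite cfg"
  assume "s \<in> cfgs n"
  then have "s = (\<lambda>q. q \<in> {q. s q})" "{q. s q} \<in> Pow (qubits n)"
    by (auto simp: cfgs_def)
  then show "s \<in> (\<lambda>A q. q \<in> A) ` Pow (qubits n)" by blast
qed (auto simp: cfgs_def)

lemma finite_cfgs [simp]: "finite (cfgs n)"
  by (simp add: cfgs_eq_image_Pow)

lemma card_cfgs: "card (cfgs n :: 'd::finite cfg set) = 2 ^ (CARD('d) * n)"
proof -
  have "inj_on (\<lambda>A q. q \<in> A) (Pow (qubits n :: ('d \<times> nat) set))"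
    by (rule inj_onI) (metis Collect_mem_eq)
  then show ?thesis
    by (simp add: cfgs_eq_image_Pow card_image card_Pow qubits_def card_cartesian_product)
qed

definition flip :: "nat \<Rightarrow> 'd::finite cfg \<Rightarrow> 'd cfg" where
  "flip n a = (\<lambda>q. q \<in> qubits n \<and> \<not> a q)"

lemma flip_in_cfgs [simp]: "flip n a \<in> cfgs n"
  by (simp add: flip_def cfgs_def)

lemma flip_flip [simp]: "a \<in> cfgs n \<Longrightarrow> flip n (flip n a) = a"
  by (auto simp: flip_def cfgs_def fun_eq_iff)

lemma flip_neq:
  assumes "n \<ge> 1"
  shows "flip n a \<noteq> a"
proof
  assume "flip n a = a"
  then have "flip n a (undefined, 0) = a (undefined, 0)" by simp
  with assms show False by (simp add: flip_def qubits_def)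
qed

lemma Mop_eq:
  assumes "a \<in> cfgs n" "b \<in> cfgs n"
  shows "Mop n b a = (if b = flip n a then 1 else 0)"
proof -
  have "Mop n b a = (\<Prod>q\<in>qubits n. if b q \<noteq> a q then 1 else 0)"
    by (simp add: Mop_def tensor_all_def sigma_x_def)
  also have "\<dots> = (if \<forall>q\<in>qubits n. b q \<noteq> a q then 1 else 0)"
    by (simp add: prod.neutral)
  also have "(\<forall>q\<in>qubits n. b q \<noteq> a q) \<longleftrightarrow> b = flip n a"
    using assms by (auto simp: cfgs_def flip_def fun_eq_iff)
  finally show ?thesis .
qed

lemma tr_mmul_Mop:
  fixes R :: "'d::finite op"
  shows "tr n (mmul n R (Mop n)) = (\<Sum>a\<in>cfgs n. R a (flip n a))"
  unfolding tr_def mmul_def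
proof (rule sum.cong [OF refl])
  fix a :: "'d cfg" assume "a \<in> cfgs n"
  then have "(\<Sum>b\<in>cfgs n. R a b * Mop n b a) = (\<Sum>b\<in>cfgs n. if b = flip n a then R a b else 0)"
    by (intro sum.cong) (simp_all add: Mop_eq)
  then show "(\<Sum>b\<in>cfgs n. R a b * Mop n b a) = R a (flip n a)"
    by simp
qed

lemma mmul_Mop_Mop:
  assumes "a \<in> cfgs n" "b \<in> cfgs n"
  shows "mmul n (Mop n) (Mop n) a b = idop a b"
proof -
  have "mmul n (Mop n) (Mop n) a b = (\<Sum>c\<in>cfgs n. if c = flip n a then Mop n c b else 0)"
    unfolding mmul_def using assms
    by (intro sum.cong) (auto simp: Mop_eq)
  also have "\<dots> = Mop n (flip n a) b"
    by simp
  also have "\<dots> = idop a b"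
    using assms by (auto simp: Mop_eq idop_def) (metis flip_flip)
  finally show ?thesis .
qed

lemma tr_mmul_Mop_Mop:
  fixes R :: "'d::finite op"
  shows "tr n (mmul n R (mmul n (Mop n) (Mop n))) = tr n R"
  unfolding tr_def
proof (rule sum.cong [OF refl])
  fix a :: "'d cfg" assume "a \<in> cfgs n"
  then have "(\<Sum>b\<in>cfgs n. R a b * mmul n (Mop n) (Mop n) b a) = (\<Sum>b\<in>cfgs n. if b = a then R a b else 0)"
    by (intro sum.cong) (simp_all add: mmul_Mop_Mop idop_def)
  with \<open>a \<in> cfgs n\<close> show "mmul n R (mmul n (Mop n) (Mop n)) a a = R a a"
    by (simp add: mmul_def [of n R])
qed

definition diag_op :: "('d::finite cfg \<Rightarrow> complex) \<Rightarrow> 'd op" where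
  "diag_op u = (\<lambda>a b. if a = b then u a else 0)"

lemma conj_diag_op:
  assumes "a \<in> cfgs n" "c \<in> cfgs n"
  shows "mmul n (mmul n (diag_op u) R) (adj (diag_op u)) a c = u a * R a c * cnj (u c)"
  using assms by (simp add: mmul_def diag_op_def adj_def if_distrib [of cnj]
      if_distrib [of "\<lambda>z. z * _"] if_distrib [of "(*) _"] cong: if_cong)

definition generator_eigenvalue :: "nat \<Rightarrow> real^'d::finite \<Rightarrow> 'd cfg \<Rightarrow> real" where
  "generator_eigenvalue n x a = (\<Sum>i\<in>UNIV. x $ i * (1/2 * (\<Sum>k<n. if a (i,k) then -1 else 1)))"

lemma generator_diag: "generator n x a a = complex_of_real (generator_eigenvalue n x a)"
proof -
  have "(\<Sum>k<n. if P k then -1 else 1 :: complex) = of_real (\<Sum>k<n. if P k then -1 else 1)" for P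
    by (induct n) auto
  then show ?thesis
    by (simp add: generator_def Hnode_def on_qubit_def sigma_z_def generator_eigenvalue_def)
qed

lemma Uop_eq_diag_op: "Uop n x = diag_op (\<lambda>a. cis (- generator_eigenvalue n x a))"
  by (simp add: Uop_def diag_op_def generator_diag cis_conv_exp fun_eq_iff)

lemma rho_x_eq:
  assumes "a \<in> cfgs n" "c \<in> cfgs n"
  shows "rho_x n F x a c = cis (generator_eigenvalue n x c - generator_eigenvalue n x a) * rho0 n F a c"
  using assms by (simp add: rho_x_def Uop_eq_diag_op conj_diag_op cis_cnj cis_mult mult_ac)

lemma tr_rho_x:
  fixes x :: "real^'d::finite"
  shows "tr n (rho_x n F x) = tr n (rho0 n F :: 'd op)"
  by (auto simp: tr_def rho_x_eq intro: sum.cong)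

definition all_ones :: "nat \<Rightarrow> 'd::finite cfg" where
  "all_ones n = (\<lambda>q. q \<in> qubits n)"

lemma zeros_in_cfgs [simp]: "(\<lambda>q. False) \<in> cfgs n"
  by (simp add: cfgs_def)

lemma all_ones_in_cfgs [simp]: "all_ones n \<in> cfgs n"
  by (simp add: cfgs_def all_ones_def)

lemma flip_zeros [simp]: "flip n (\<lambda>q. False) = all_ones n"
  by (simp add: flip_def all_ones_def)

lemma flip_all_ones [simp]: "flip n (all_ones n) = (\<lambda>q. False)"
  by (simp add: flip_def all_ones_def)

lemma zeros_neq_all_ones:
  assumes "n \<ge> 1"
  shows "(\<lambda>q. False) \<noteq> all_ones n"
  using flip_neq [OF assms, of "\<lambda>q. False"] by (metis flip_zeros)

lemma sum_cfgs_ghz_support: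
  assumes "n \<ge> 1" and "\<And>a. a \<in> cfgs n \<Longrightarrow> a \<noteq> (\<lambda>q. False) \<Longrightarrow> a \<noteq> all_ones n \<Longrightarrow> f a = 0"
  shows "(\<Sum>a\<in>cfgs n. f a) = f (\<lambda>q. False) + f (all_ones n)"
proof -
  have "(\<Sum>a\<in>cfgs n. f a) = (\<Sum>a\<in>{\<lambda>q. False, all_ones n}. f a)"
    using assms(2) by (intro sum.mono_neutral_right) auto
  also have "\<dots> = f (\<lambda>q. False) + f (all_ones n)"
    using zeros_neq_all_ones [OF assms(1)] by (subst sum.insert) auto
  finally show ?thesis .
qed

lemma ghz_proj_eq_0: "a \<noteq> (\<lambda>q. False) \<Longrightarrow> a \<noteq> all_ones n \<Longrightarrow> ghz_proj n a b = 0"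
  by (simp add: ghz_proj_def ghz_vec_def all_ones_def)

lemma ghz_proj_on_support:
  assumes "a \<in> {\<lambda>q. False, all_ones n}" "b \<in> {\<lambda>q. False, all_ones n}"
  shows "ghz_proj n a b = 1/2"
proof -
  have "complex_of_real (sqrt 2) * complex_of_real (sqrt 2) = 2"
    by (simp flip: of_real_mult)
  with assms show ?thesis
    by (auto simp: ghz_proj_def ghz_vec_def all_ones_def)
qed

definition ghz_coherence :: "nat \<Rightarrow> real \<Rightarrow> real" where
  "ghz_coherence N F = F - (1 - F) / (2 ^ N - 1)"

lemma rho0_off_diag:
  fixes a c :: "'d::finite cfg"
  assumes "a \<noteq> c"
  shows "rho0 n F a c = complex_of_real (ghz_coherence (CARD('d) * n) F) * ghz_proj n a c"
  using assms by (simp add: rho0_def idop_def ghz_coherence_def Let_def algebra_simps)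
    (simp add: add_divide_distrib [symmetric])

lemma sum_ghz_proj_diag:
  assumes "n \<ge> 1"
  shows "(\<Sum>a\<in>cfgs n. ghz_proj n a a) = 1"
  using assms by (simp add: sum_cfgs_ghz_support ghz_proj_eq_0 ghz_proj_on_support)

lemma tr_rho0:
  assumes "n \<ge> 1"
  shows "tr n (rho0 n F :: 'd::finite op) = 1"
proof -
  let ?N = "CARD('d) * n"
  define p where "p = (1 - F) / (2 ^ ?N - 1)"
  let ?g = "\<lambda>a :: 'd cfg. ghz_proj n a a"
  have "(1::real) < 2 ^ ?N"
    using assms by (intro one_less_power) auto
  then have unit_trace: "F + p * (2 ^ ?N - 1) = 1"
    by (simp add: p_def)
  have "tr n (rho0 n F :: 'd op) = (\<Sum>a\<in>cfgs n. of_real F * ?g a + of_real p * (1 - ?g a))"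
    by (simp add: tr_def rho0_def idop_def Let_def p_def)
  also have "\<dots> = of_real F * (\<Sum>a\<in>cfgs n. ?g a) + of_real p * (of_nat (card (cfgs n :: 'd cfg set)) - (\<Sum>a\<in>cfgs n. ?g a))"
    by (simp add: sum.distrib sum_distrib_left [symmetric] sum_subtractf)
  also have "\<dots> = of_real (F + p * (2 ^ ?N - 1))"
    by (simp add: sum_ghz_proj_diag [OF assms] card_cfgs)
  finally show ?thesis
    by (simp add: unit_trace)
qed

lemma generator_eigenvalue_zeros:
  "generator_eigenvalue n x (\<lambda>q. False) = real n * (\<Sum>i\<in>UNIV. x $ i) / 2"
  by (simp add: generator_eigenvalue_def sum_distrib_left sum_distrib_right sum_divide_distrib mult_ac)

lemma generator_eigenvalue_all_ones:
  "generator_eigenvalue n x (all_ones n) = - (real n * (\<Sum>i\<in>UNIV. x $ i) / 2)"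
  by (simp add: generator_eigenvalue_def all_ones_def qubits_def sum_distrib_left sum_distrib_right
      sum_divide_distrib sum_negf mult_ac)

lemma expect_Mop:
  fixes x :: "real^'d::finite"
  assumes "n \<ge> 1"
  shows "expect n F x (Mop n) = ghz_coherence (CARD('d) * n) F * cos (real n * (\<Sum>i\<in>UNIV. x $ i))"
proof -
  let ?c = "complex_of_real (ghz_coherence (CARD('d) * n) F)"
  let ?t = "real n * (\<Sum>i\<in>UNIV. x $ i)"
  have off_ghz: "rho_x n F x a (flip n a) = 0"
    if "a \<in> cfgs n" "a \<noteq> (\<lambda>q. False)" "a \<noteq> all_ones n" for a
    using that flip_neq [OF assms, of a] by (simp add: rho_x_eq rho0_off_diag ghz_proj_eq_0)
  have "tr n (mmul n (rho_x n F x) (Mop n)) = (\<Sum>a\<in>cfgs n. rho_x n F x a (flip n a))"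
    by (rule tr_mmul_Mop)
  also have "\<dots> = rho_x n F x (\<lambda>q. False) (all_ones n) + rho_x n F x (all_ones n) (\<lambda>q. False)"
    using sum_cfgs_ghz_support [OF assms, of "\<lambda>a. rho_x n F x a (flip n a)"] off_ghz by simp
  also have "\<dots> = ?c / 2 * (cis (- ?t) + cis ?t)"
    by (simp add: rho_x_eq rho0_off_diag [OF zeros_neq_all_ones [OF assms]]
        rho0_off_diag [OF not_sym [OF zeros_neq_all_ones [OF assms]]] ghz_proj_on_support
        generator_eigenvalue_zeros generator_eigenvalue_all_ones algebra_simps)
  also have "\<dots> = complex_of_real (ghz_coherence (CARD('d) * n) F * cos ?t)"
    by (simp add: complex_eq_iff)
  finally show ?thesis
    by (simp add: expect_def)
qed

lemma expect_Mop_sq: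
  fixes x :: "real^'d::finite"
  assumes "n \<ge> 1"
  shows "expect n F x (mmul n (Mop n) (Mop n)) = 1"
  by (simp add: expect_def tr_mmul_Mop_Mop tr_rho_x tr_rho0 [OF assms])

lemma sum_vec_eq_sqrt_card_inner_v1:
  fixes x :: "real^'d::finite"
  shows "(\<Sum>i\<in>UNIV. x $ i) = sqrt (real CARD('d)) * (v1 \<bullet> x)"
  by (simp add: v1_def inner_vec_def sum_divide_distrib [symmetric])

lemma inner_v1_self [simp]: "v1 \<bullet> (v1 :: real^'d::finite) = 1"
  by (simp add: v1_def inner_vec_def power_divide)

lemma dirM_eq:
  fixes x :: "real^'d::finite"
  assumes "n \<ge> 1"
  shows "dirM n F x = - ghz_coherence (CARD('d) * n) F * (real n * sqrt (real CARD('d)))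
                        * sin (real n * sqrt (real CARD('d)) * (v1 \<bullet> x))"
proof -
  let ?c = "ghz_coherence (CARD('d) * n) F"
  let ?k = "real n * sqrt (real CARD('d))"
  have "(\<lambda>y. expect n F y (Mop n)) = (\<lambda>y :: real^'d. ?c * cos (?k * (v1 \<bullet> y)))"
    by (simp add: expect_Mop [OF assms] sum_vec_eq_sqrt_card_inner_v1 mult.assoc)
  moreover have "((\<lambda>y. ?c * cos (?k * (v1 \<bullet> y))) has_derivative
      (\<lambda>h. ?c * (?k * (v1 \<bullet> h) * - sin (?k * (v1 \<bullet> x))))) (at x)"
    by (intro derivative_eq_intros) auto
  ultimately show ?thesis
    by (simp add: dirM_def frechet_derivative_at [symmetric])
qed

lemma VarM_eq:
  fixes x :: "real^'d::finite"
  assumes "n \<ge> 1"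
  shows "VarM n F x =
    (let d = real CARD('d); \<theta> = v1 \<bullet> x; c = ghz_coherence (CARD('d) * n) F in
     (1 - c\<^sup>2 * (cos (real n * sqrt d * \<theta>))\<^sup>2)
       / (d * (real n)\<^sup>2 * c\<^sup>2 * (sin (real n * sqrt d * \<theta>))\<^sup>2))"
  by (simp add: VarM_def expect_Mop_sq [OF assms] expect_Mop [OF assms] dirM_eq [OF assms]
      sum_vec_eq_sqrt_card_inner_v1 power_mult_distrib mult.assoc Let_def)

lemma abs_ghz_coherence_less_1:
  assumes "0 \<le> F" "F < 1" "N \<ge> 2"
  shows "\<bar>ghz_coherence N F\<bar> < 1"
proof -
  have "(2::real) ^ 2 \<le> 2 ^ N"
    using assms(3) by (intro power_increasing) auto
  then have "0 \<le> (1 - F) / (2 ^ N - 1)" "(1 - F) / (2 ^ N - 1) < 1"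
    using assms(1,2) by (simp_all add: divide_less_eq_1)
  with assms(1,2) show ?thesis
    unfolding ghz_coherence_def abs_less_iff by linarith
qed

lemma dirM_sq:
  fixes x :: "real^'d::finite"
  assumes "n \<ge> 1"
  shows "(dirM n F x)\<^sup>2 = real CARD('d) * (real n)\<^sup>2 * (ghz_coherence (CARD('d) * n) F)\<^sup>2
                          * (sin (real n * sqrt (real CARD('d)) * (v1 \<bullet> x)))\<^sup>2"
  by (simp add: dirM_eq [OF assms] power_mult_distrib)

lemma filterlim_VarM_at_top:
  assumes "CARD('d::finite) \<ge> 2" "n \<ge> 1" "0 \<le> F" "F < 1"
  shows "filterlim (VarM n F :: real^'d \<Rightarrow> real) at_top (at 0 within {x. dirM n F x \<noteq> 0})"
proof -
  let ?A = "{x :: real^'d. dirM n F x \<noteq> 0}"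
  let ?c = "ghz_coherence (CARD('d) * n) F"
  let ?\<phi> = "\<lambda>x :: real^'d. real n * sqrt (real CARD('d)) * (v1 \<bullet> x)"
  let ?den = "\<lambda>x. real CARD('d) * (real n)\<^sup>2 * ?c\<^sup>2 * (sin (?\<phi> x))\<^sup>2"
  have "CARD('d) * n \<ge> 2"
    using assms(1,2) by (metis mult.right_neutral mult_le_mono)
  then have "?c\<^sup>2 < 1"
    using assms(3,4) by (simp add: abs_square_less_1 abs_ghz_coherence_less_1)
  have \<phi>: "(?\<phi> \<longlongrightarrow> 0) (at 0 within ?A)"
    by (auto intro!: tendsto_eq_intros)
  have "((\<lambda>x. 1 - ?c\<^sup>2 * (cos (?\<phi> x))\<^sup>2) \<longlongrightarrow> 1 - ?c\<^sup>2) (at 0 within ?A)"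
    using \<phi> by (auto intro!: tendsto_eq_intros)
  moreover have "(?den \<longlongrightarrow> 0) (at 0 within ?A)"
    using \<phi> by (auto intro!: tendsto_eq_intros)
  moreover have "0 < ?den x" if "x \<in> ?A" for x
    using that by (simp flip: dirM_sq [OF assms(2)])
  then have "eventually (\<lambda>x. 0 < ?den x) (at 0 within ?A)"
    by (auto simp: eventually_at_filter)
  ultimately have "filterlim (\<lambda>x. (1 - ?c\<^sup>2 * (cos (?\<phi> x))\<^sup>2) / ?den x) at_top (at 0 within ?A)"
    using \<open>?c\<^sup>2 < 1\<close> by (intro LIM_at_top_divide) auto
  moreover have "VarM n F = (\<lambda>x. (1 - ?c\<^sup>2 * (cos (?\<phi> x))\<^sup>2) / ?den x)"
    by (simp add: fun_eq_iff VarM_eq [OF assms(2)] Let_def)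
  ultimately show ?thesis
    by simp
qed

theorem mainTheorem7:
  fixes n :: nat and F :: real
  assumes "CARD('d::finite) \<ge> 2" and "n \<ge> 1"
    and "0 \<le> F" and "F < 1" and "F \<noteq> 1 / 2 ^ (CARD('d) * n)"
  shows "(\<forall>x :: real^'d. dirM n F x \<noteq> 0 \<longrightarrow>
           (let d = real CARD('d); \<theta> = v1 \<bullet> x;
                c = F - (1 - F) / (2 ^ (CARD('d) * n) - 1) in
            VarM n F x = (1 - c\<^sup>2 * (cos (real n * sqrt d * \<theta>))\<^sup>2)
                         / (d * (real n)\<^sup>2 * c\<^sup>2 * (sin (real n * sqrt d * \<theta>))\<^sup>2)))
       \<and> filterlim (VarM n F :: real^'d \<Rightarrow> real) at_top
                   (at 0 within {x. dirM n F x \<noteq> 0})"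
  using VarM_eq [where 'd = 'd, OF assms(2)] filterlim_VarM_at_top [OF assms(1-4)]
  by (simp add: ghz_coherence_def)

end
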